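(* Let $a,b,c$ be non-constant polynomials in $\mathbb{F}_2[t]$ and let $\boldsymbol{\varepsilon}=a,(b,c)^\infty$, i.e. $\varepsilon_0=a$, $\varepsilon_{2m+1}=b$, $\varepsilon_{2m+2}=c$ for $m\geq 0$. Let $\beta=1/CF(\mathbf{s}(\boldsymbol{\varepsilon}))$. Then $$\beta^4=\frac{bc(b+c)}{a}+\frac{c^2}{a^2}+bc(b+c)\,\beta+bc\,\beta^2.$$
   Context: Given a sequence $\boldsymbol{\varepsilon}=(\varepsilon_n)_{n\geq 0}$, define words $W_0=$ empty word and $W_{n+1}=W_n\,\varepsilon_n\,W_n$ (concatenation) for $n\geq 0$; $\mathbf{s}(\boldsymbol{\varepsilon})=(s_i)_{i\geq 0}$ is the infinite word beginning with every $W_n$, i.e. $\varepsilon_0\varepsilon_1\varepsilon_0\varepsilon_2\varepsilon_0\varepsilon_1\varepsilon_0\varepsilon_3\cdots$. $CF(\mathbf{s}(\boldsymbol{\varepsilon}))=[s_0,s_1,\dots]=s_0+1/(s_1+1/(s_2+\cdots))$ is the infinite continued fraction in $\mathbb{F}_2((1/t))$ with these partial quotients. *)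

theory Defs
  imports "HOL-Computational_Algebra.Computational_Algebra" "HOL-Library.Z2"
begin

(* Laurent series field F_2((1/t)): elements of type "bit fls", where the formal
   variable X of fls plays the role of 1/t, so t = fls_X_inv. *)

definition tvar :: "bit fls" where
  "tvar = fls_X_inv"

definition emb :: "bit poly \<Rightarrow> bit fls" where
  "emb p = poly (map_poly fls_const p) tvar"

fun W :: "(nat \<Rightarrow> 'a) \<Rightarrow> nat \<Rightarrow> 'a list" where
  "W eps 0 = []"
| "W eps (Suc n) = W eps n @ [eps n] @ W eps n"

(* the infinite word s(eps) beginning with every W_n (length W_n = 2^n - 1) *)
definition sword :: "(nat \<Rightarrow> 'a) \<Rightarrow> nat \<Rightarrow> 'a" where
  "sword eps i = W eps (Suc i) ! i"

fun cf_fin :: "'a::field list \<Rightarrow> 'a" where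
  "cf_fin [] = 0"
| "cf_fin [x] = x"
| "cf_fin (x # y # ys) = x + inverse (cf_fin (y # ys))"

definition convergent_cf :: "(nat \<Rightarrow> bit fls) \<Rightarrow> nat \<Rightarrow> bit fls" where
  "convergent_cf s n = cf_fin (map s [0..<Suc n])"

(* infinite continued fraction: limit of convergents in the (1/t)-adic topology *)
definition CF :: "(nat \<Rightarrow> bit fls) \<Rightarrow> bit fls" where
  "CF s = lim (convergent_cf s)"

end

theory Submission
  imports Defs
begin

text \<open>
  Partial quotients of positive degree in \<open>t\<close> make the convergents converge \<open>1/t\<close>-adically,
  the \<open>m\<close>-th one agreeing with the limit below order \<open>2m + 1\<close>. Since \<open>W(n+1) = W(n) \<epsilon>(n) W(n)\<close>,
  the matrix of \<open>W(n)\<close> is symmetric, \<open>(p(n), q(n); q(n), r(n))\<close> with \<open>p(n+1) = \<epsilon>(n) p(n)\<^sup>2\<close>,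
  and \<open>\<beta>\<close> is approximated by \<open>q(n)/p(n) = 1/p(1) + ... + 1/p(n)\<close>. In characteristic 2 squaring
  is additive, so for \<open>\<epsilon> = a,(b,c)\<^sup>\<infinity>\<close> the sums \<open>O\<close> and \<open>E\<close> of the odd- and even-indexed terms
  satisfy \<open>b E = O\<^sup>2\<close> and \<open>O \<approx> 1/a + E\<^sup>2/c\<close>. Eliminating them gives the quartic for \<open>\<beta>\<close> up to
  an error that vanishes in the limit.
\<close>

unbundle fps_syntax

definition vanishes_below :: "int \<Rightarrow> 'a::field fls \<Rightarrow> bool" where
  "vanishes_below K x \<longleftrightarrow> (\<forall>j<K. x $$ j = 0)"

lemma vanishes_below_iff: "vanishes_below K x \<longleftrightarrow> x = 0 \<or> K \<le> fls_subdegree x"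
  unfolding vanishes_below_def
  by (metis fls_eq0_below_subdegree fls_nonzeroI nth_fls_subdegree_nonzero order.strict_trans2 not_le)

lemma vanishes_below_zero [simp]: "vanishes_below K 0"
  by (simp add: vanishes_below_def)

lemma vanishes_below_add: "vanishes_below K x \<Longrightarrow> vanishes_below K y \<Longrightarrow> vanishes_below K (x + y)"
  by (simp add: vanishes_below_def)

lemma vanishes_below_diff: "vanishes_below K x \<Longrightarrow> vanishes_below K y \<Longrightarrow> vanishes_below K (x - y)"
  by (simp add: vanishes_below_def)

lemma vanishes_below_minus_commute: "vanishes_below K (x - y) \<longleftrightarrow> vanishes_below K (y - x)"
  by (auto simp: vanishes_below_def)

lemma vanishes_below_mono: "K' \<le> K \<Longrightarrow> vanishes_below K x \<Longrightarrow> vanishes_below K' x"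
  by (simp add: vanishes_below_def)

lemma vanishes_below_subdegree: "vanishes_below (fls_subdegree x) x"
  by (simp add: vanishes_below_def)

lemma vanishes_below_mult:
  "vanishes_below K x \<Longrightarrow> vanishes_below L y \<Longrightarrow> vanishes_below (K + L) (x * y)"
  unfolding vanishes_below_iff by (cases "x = 0"; cases "y = 0") auto

lemma vanishes_below_inverse: "vanishes_below (- fls_subdegree x) (inverse x)"
  by (metis fls_inverse_subdegree vanishes_below_subdegree)

lemma vanishes_below_diff_nth: "vanishes_below K (x - y) \<Longrightarrow> j < K \<Longrightarrow> x $$ j = y $$ j"
  by (simp add: vanishes_below_def)

lemma vanishes_below_power:
  assumes "vanishes_below K x"
  shows "vanishes_below (int n * K) (x ^ n)"
proof (induction n)
  case (Suc n)
  from vanishes_below_mult[OF assms Suc.IH] show ?case by (simp add: algebra_simps)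
qed (simp add: vanishes_below_def)

lemma zero_if_vanishes_below_all: "(\<And>K. vanishes_below K x) \<Longrightarrow> x = 0"
  using vanishes_below_iff[of "fls_subdegree x + 1" x] by auto

lemma tendsto_if_vanishes_below:
  fixes f :: "nat \<Rightarrow> 'a::field fls"
  assumes "\<And>K. \<exists>N. \<forall>m\<ge>N. vanishes_below K (f m - L)"
  shows "f \<longlonglongrightarrow> L"
proof (rule metric_LIMSEQ_I)
  fix r :: real assume "0 < r"
  then obtain k :: nat where k: "(1/2::real) ^ k < r" using real_arch_pow_inv[of r "1/2"] by auto
  obtain N where N: "\<forall>m\<ge>N. vanishes_below (int k) (f m - L)" using assms by blast
  have "dist (f m) L < r" if "m \<ge> N" for m
  proof (cases "f m = L")
    case True thus ?thesis using \<open>0 < r\<close> by simp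
  next
    case False
    hence k_le: "int k \<le> fls_subdegree (f m - L)" using N that by (auto simp: vanishes_below_iff)
    have "dist (f m) L = inverse (2 ^ nat (fls_subdegree (f m - L)))"
      using False k_le by (simp add: dist_fls_def)
    also have "\<dots> \<le> inverse (2 ^ k)"
      using k_le by (intro le_imp_inverse_le) (auto intro: power_increasing)
    also have "\<dots> = (1/2) ^ k" by (simp add: power_one_over inverse_eq_divide)
    finally show ?thesis using k by simp
  qed
  thus "\<exists>N. \<forall>m\<ge>N. dist (f m) L < r" by blast
qed

text \<open>As \<open>X\<close> stands for \<open>1/t\<close>, this says that \<open>x\<close> has positive degree in \<open>t\<close>.\<close>
definition pos_deg :: "'a::field fls \<Rightarrow> bool" where
  "pos_deg x \<longleftrightarrow> x \<noteq> 0 \<and> fls_subdegree x \<le> -1"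

lemma vanishes_below_inverse_pos_deg: "pos_deg x \<Longrightarrow> vanishes_below 1 (inverse x)"
  unfolding pos_deg_def by (rule vanishes_below_mono[OF _ vanishes_below_inverse]) simp

lemma pos_deg_perturb:
  assumes "pos_deg x" "vanishes_below 0 (x - y)"
  shows "pos_deg y"
proof -
  have "x $$ fls_subdegree x \<noteq> 0" "fls_subdegree x < 0"
    using assms(1) by (auto simp: pos_deg_def)
  hence "y $$ fls_subdegree x \<noteq> 0"
    using vanishes_below_diff_nth[OF assms(2)] by metis
  hence "y \<noteq> 0" "fls_subdegree y \<le> fls_subdegree x"
    by (auto intro: fls_subdegree_leI)
  thus ?thesis using assms(1) by (simp add: pos_deg_def)
qed

lemma inverse_diff_vanishes_below:
  assumes "pos_deg x" "pos_deg y" "vanishes_below K (x - y)"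
  shows "vanishes_below (K + 2) (inverse x - inverse y)"
proof -
  have "inverse x - inverse y = (y - x) * (inverse x * inverse y)"
    using assms(1,2) by (simp add: pos_deg_def field_simps)
  moreover have "vanishes_below (K + (1 + 1)) ((y - x) * (inverse x * inverse y))"
    using assms by (intro vanishes_below_mult vanishes_below_inverse_pos_deg)
      (simp_all add: vanishes_below_minus_commute)
  ultimately show ?thesis by simp
qed

section \<open>Characteristic 2\<close>

lemma CHAR_bit: "CHAR(bit) = 2"
proof (rule CHAR_eqI)
  fix n assume "of_nat n = (0::bit)"
  thus "2 dvd n" by (induction n) auto
qed simp

lemma bit_fls_diff_eq_add: "(x::bit fls) - y = x + y"
  by (rule minus_CHAR_2) (simp add: CHAR_bit)

lemma bit_fls_add_double: "(x::bit fls) + 2 * y = x"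
proof -
  have "(2::bit fls) = of_nat CHAR(bit fls)" by (simp add: CHAR_bit)
  thus ?thesis by (simp only: of_nat_CHAR) simp
qed

lemma bit_fls_power2_add: "((x::bit fls) + y) ^ 2 = x ^ 2 + y ^ 2"
  by (rule freshmans_dream) (simp_all add: CHAR_bit)

lemma bit_fls_power4_add: "((x::bit fls) + y) ^ 4 = x ^ 4 + y ^ 4"
  by (rule freshmans_dream'[where n = 2]) (simp_all add: CHAR_bit)

lemma quartic_root_of_approximations:
  fixes x A B C D :: "bit fls" and u d :: "nat \<Rightarrow> bit fls"
  assumes "\<And>k. vanishes_below (int k) (x - u k)" "\<And>k. vanishes_below (int k) (d k)"
    and "\<And>k. u k ^ 4 = A + C * u k + B * u k ^ 2 + C * d k + D * d k ^ 2"
  shows "x ^ 4 = A + C * x + B * x ^ 2"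
proof -
  define M where "M = \<bar>fls_subdegree B\<bar> + \<bar>fls_subdegree C\<bar> + \<bar>fls_subdegree D\<bar>"
  have approx: "vanishes_below (int k - M) (x ^ 4 - (A + C * x + B * x ^ 2))" for k
  proof -
    define y where "y = x - u k"
    have "x ^ 4 = u k ^ 4 + y ^ 4" "x ^ 2 = u k ^ 2 + y ^ 2"
      unfolding y_def by (simp_all flip: bit_fls_power4_add bit_fls_power2_add)
    hence "x ^ 4 - (A + C * x + B * x ^ 2) = C * d k + D * d k ^ 2 + y ^ 4 - C * y - B * y ^ 2"
      using assms(3)[of k] by (simp add: y_def algebra_simps)
    moreover have "vanishes_below (int k - M) (C * d k + D * d k ^ 2 + y ^ 4 - C * y - B * y ^ 2)"
    proof -
      have y: "vanishes_below (int k) y" and dk: "vanishes_below (int k) (d k)"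
        using assms(1,2) by (simp_all add: y_def)
      note lower = vanishes_below_mult[OF vanishes_below_subdegree]
      show ?thesis
        by (intro vanishes_below_add vanishes_below_diff;
            rule vanishes_below_mono[rotated],
            (rule lower vanishes_below_power y dk)+)
          (simp_all add: M_def)
    qed
    ultimately show ?thesis by simp
  qed
  have "x ^ 4 - (A + C * x + B * x ^ 2) = 0"
  proof (rule zero_if_vanishes_below_all)
    fix K
    show "vanishes_below K (x ^ 4 - (A + C * x + B * x ^ 2))"
      using approx[of "nat (K + M)"] by (rule vanishes_below_mono[rotated]) simp
  qed
  thus ?thesis by simp
qed

section \<open>Polynomials in \<open>t\<close> as Laurent series in \<open>1/t\<close>\<close>

lemma emb_pCons: "emb (pCons c p) = fls_const c + tvar * emb p"
  unfolding emb_def by (simp add: map_poly_pCons)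

lemma fls_nth_emb: "emb p $$ j = (if j \<le> 0 then coeff p (nat (- j)) else 0)"
proof (induction p arbitrary: j)
  case 0 thus ?case by (simp add: emb_def)
next
  case (pCons c p)
  have "emb (pCons c p) $$ j = (if j = 0 then c else 0) + emb p $$ (j + 1)"
    by (simp add: emb_pCons tvar_def fls_X_inv_times_conv_shift)
  also have "\<dots> = (if j \<le> 0 then coeff (pCons c p) (nat (- j)) else 0)"
    using pCons.IH[of "j + 1"] by (auto simp: coeff_pCons nat_diff_distrib' split: nat.splits)
  finally show ?case .
qed

lemma emb_add: "emb (p + q) = emb p + emb q"
  by (rule fls_eqI) (simp add: fls_nth_emb)

lemma emb_smult: "emb (smult c q) = fls_const c * emb q"
  by (rule fls_eqI) (simp add: fls_nth_emb)

lemma emb_mult: "emb (p * q) = emb p * emb q"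
proof (induction p)
  case (pCons c p)
  have "emb (smult c q + pCons 0 (p * q)) = fls_const c * emb q + tvar * (emb p * emb q)"
    by (simp add: emb_add emb_smult emb_pCons pCons.IH)
  thus ?case by (simp add: emb_pCons algebra_simps)
qed (simp add: emb_def)

lemma emb_one: "emb 1 = 1"
  by (simp add: emb_def)

lemma emb_power: "emb (p ^ n) = emb p ^ n"
  by (induction n) (simp_all add: emb_one emb_mult)

lemma fls_subdegree_emb: "p \<noteq> 0 \<Longrightarrow> fls_subdegree (emb p) = - int (degree p)"
  by (rule fls_subdegree_eqI) (simp_all add: fls_nth_emb coeff_eq_0)

lemma pos_deg_emb: "degree p \<ge> 1 \<Longrightarrow> pos_deg (emb p)"
proof -
  assume deg: "degree p \<ge> 1"
  hence "p \<noteq> 0" by auto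
  hence "emb p $$ - int (degree p) \<noteq> 0" by (simp add: fls_nth_emb)
  thus ?thesis using deg fls_subdegree_emb[OF \<open>p \<noteq> 0\<close>] by (auto simp: pos_deg_def)
qed

section \<open>Continued fractions with partial quotients of positive degree\<close>

lemma cf_fin_Cons: "l \<noteq> [] \<Longrightarrow> cf_fin (x # l) = x + inverse (cf_fin l)"
  by (cases l) auto

lemma pos_deg_cf_fin: "l \<noteq> [] \<Longrightarrow> \<forall>x\<in>set l. pos_deg x \<Longrightarrow> pos_deg (cf_fin l)"
proof (induction l rule: cf_fin.induct)
  case (3 x y ys)
  have "vanishes_below 0 (inverse (cf_fin (y # ys)))"
    using 3 by (intro vanishes_below_mono[OF _ vanishes_below_inverse_pos_deg]) auto
  hence "vanishes_below 0 (x - (x + inverse (cf_fin (y # ys))))"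
    by (simp add: vanishes_below_def)
  with 3 show ?case by (auto intro: pos_deg_perturb)
qed simp_all

lemma cf_fin_common_prefix:
  assumes "pre \<noteq> []" "\<forall>x\<in>set (pre @ r1 @ r2). pos_deg x"
  shows "vanishes_below (2 * int (length pre) - 1) (cf_fin (pre @ r1) - cf_fin (pre @ r2))"
  using assms
proof (induction pre rule: list_nonempty_induct)
  case (single x)
  have tail: "vanishes_below 1 (cf_fin (x # r) - x)" if "\<forall>y\<in>set r. pos_deg y" for r
  proof (cases "r = []")
    case False
    thus ?thesis
      using vanishes_below_inverse_pos_deg[OF pos_deg_cf_fin[OF False that]] by (simp add: cf_fin_Cons)
  qed simp
  have "vanishes_below 1 ((cf_fin (x # r1) - x) - (cf_fin (x # r2) - x))"
    using single by (intro vanishes_below_diff tail) auto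
  thus ?case by simp
next
  case (cons x xs)
  have ne: "xs @ r1 \<noteq> []" "xs @ r2 \<noteq> []" using cons.hyps by auto
  have "vanishes_below (2 * int (length xs) - 1 + 2)
      (inverse (cf_fin (xs @ r1)) - inverse (cf_fin (xs @ r2)))"
    using cons by (intro inverse_diff_vanishes_below pos_deg_cf_fin ne) auto
  thus ?case using ne by (simp add: cf_fin_Cons algebra_simps)
qed

lemma convergent_cf_cauchy:
  assumes "\<forall>i. pos_deg (s i)" "m \<le> m'"
  shows "vanishes_below (2 * int m + 1) (convergent_cf s m - convergent_cf s m')"
proof -
  have "[0..<Suc m'] = [0..<Suc m] @ [Suc m..<Suc m']"
    using assms(2) upt_add_eq_append[of 0 "Suc m" "m' - m"] by simp
  hence "map s [0..<Suc m'] = map s [0..<Suc m] @ map s [Suc m..<Suc m']" by simp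
  moreover have "vanishes_below (2 * int (length (map s [0..<Suc m])) - 1)
     (cf_fin (map s [0..<Suc m] @ []) - cf_fin (map s [0..<Suc m] @ map s [Suc m..<Suc m']))"
    using assms(1) by (intro cf_fin_common_prefix) (auto simp del: upt_Suc)
  moreover have "2 * int (length (map s [0..<Suc m])) - 1 = 2 * int m + 1"
    by (simp del: upt_Suc)
  ultimately show ?thesis by (simp only: convergent_cf_def append_Nil2)
qed

lemma convergent_cf_limit:
  assumes "\<forall>i. pos_deg (s i)"
  obtains L where "convergent_cf s \<longlonglongrightarrow> L" "\<And>m. vanishes_below (2 * int m + 1) (convergent_cf s m - L)"
proof -
  define x where "x = convergent_cf s"
  define L where "L = Abs_fls (\<lambda>j. x (nat j) $$ j)"
  obtain N where "\<forall>n<N. x 0 $$ n = 0" using fls_nth_vanishes_belowE by blast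
  hence L_nth: "L $$ j = x (nat j) $$ j" for j
    unfolding L_def by (intro nth_Abs_fls_lower_bound[of "min N 0"]) simp
  have stable: "x m $$ j = x (nat j) $$ j" if "j < 2 * int m + 1" for m j
  proof -
    define M where "M = max m (nat j)"
    have "vanishes_below (2 * int m + 1) (x m - x M)"
      unfolding x_def by (rule convergent_cf_cauchy[OF assms]) (simp add: M_def)
    hence "x m $$ j = x M $$ j" using that by (rule vanishes_below_diff_nth)
    have "vanishes_below (2 * int (nat j) + 1) (x (nat j) - x M)"
      unfolding x_def by (rule convergent_cf_cauchy[OF assms]) (simp add: M_def)
    hence "x (nat j) $$ j = x M $$ j" by (rule vanishes_below_diff_nth) simp
    with \<open>x m $$ j = x M $$ j\<close> show ?thesis by simp
  qed
  have close: "vanishes_below (2 * int m + 1) (x m - L)" for m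
    unfolding vanishes_below_def
  proof (intro allI impI)
    fix j assume "j < 2 * int m + 1"
    with stable[of j m] show "(x m - L) $$ j = 0" by (simp add: L_nth)
  qed
  have "x \<longlonglongrightarrow> L"
  proof (rule tendsto_if_vanishes_below)
    fix K
    have "\<forall>m\<ge>nat K. vanishes_below K (x m - L)"
      by (auto intro: vanishes_below_mono[OF _ close])
    thus "\<exists>N. \<forall>m\<ge>N. vanishes_below K (x m - L)" ..
  qed
  with close show ?thesis using that by (simp add: x_def)
qed

lemma pos_deg_convergent_cf: "\<forall>i. pos_deg (s i) \<Longrightarrow> pos_deg (convergent_cf s m)"
  unfolding convergent_cf_def by (rule pos_deg_cf_fin) (auto simp del: upt_Suc)

lemma
  assumes "\<forall>i. pos_deg (s i)"
  shows convergent_cf_tendsto_CF: "convergent_cf s \<longlonglongrightarrow> CF s"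
    and convergent_cf_approx_CF: "vanishes_below (2 * int m + 1) (convergent_cf s m - CF s)"
    and pos_deg_CF: "pos_deg (CF s)"
proof -
  obtain L where L: "convergent_cf s \<longlonglongrightarrow> L" "\<And>m. vanishes_below (2 * int m + 1) (convergent_cf s m - L)"
    using convergent_cf_limit[OF assms] by blast
  have "CF s = L" unfolding CF_def by (rule limI[OF L(1)])
  thus "convergent_cf s \<longlonglongrightarrow> CF s" "vanishes_below (2 * int m + 1) (convergent_cf s m - CF s)"
    using L by simp_all
  have "vanishes_below 0 (convergent_cf s 0 - L)"
    using L(2)[of 0] by (rule vanishes_below_mono[rotated]) simp
  moreover have "pos_deg (convergent_cf s 0)" using assms by (rule pos_deg_convergent_cf)
  ultimately show "pos_deg (CF s)" unfolding \<open>CF s = L\<close> by (rule pos_deg_perturb[rotated])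
qed

section \<open>The words \<open>W\<^sub>n\<close> and their matrices\<close>

lemma length_W: "length (W e n) = 2 ^ n - 1"
proof (induction n)
  case (Suc n)
  have "(1::nat) \<le> 2 ^ n" by simp
  thus ?case using Suc by simp
qed simp

lemma less_length_W_Suc: "i < length (W e (Suc i))"
proof -
  have "Suc i < 2 ^ Suc i" by (rule less_exp)
  thus ?thesis unfolding length_W by arith
qed

lemma W_prefix: "n \<le> m \<Longrightarrow> \<exists>t. W e m = W e n @ t"
  by (induction m rule: dec_induct) auto

lemma sword_eq_nth_W: "i < length (W e n) \<Longrightarrow> sword e i = W e n ! i"
proof -
  assume i: "i < length (W e n)"
  obtain t where t: "W e (max n (Suc i)) = W e n @ t" using W_prefix[of n "max n (Suc i)" e] by auto
  obtain t' where t': "W e (max n (Suc i)) = W e (Suc i) @ t'"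
    using W_prefix[of "Suc i" "max n (Suc i)" e] by auto
  show ?thesis using t t' i less_length_W_Suc[of i e] unfolding sword_def by (metis nth_append)
qed

lemma set_W_subset: "set (W e n) \<subseteq> range e"
  by (induction n) auto

lemma sword_in_range: "sword e i \<in> range e"
  unfolding sword_def by (meson nth_mem subsetD set_W_subset less_length_W_Suc)

lemma pos_deg_sword: "\<forall>k. pos_deg (e k) \<Longrightarrow> pos_deg (sword e i)"
  using sword_in_range[of e i] by auto

lemma sword_comp: "f (sword e i) = sword (f \<circ> e) i"
proof -
  have "map f (W e n) = W (f \<circ> e) n" for n by (induction n) auto
  thus ?thesis unfolding sword_def by (metis nth_map less_length_W_Suc)
qed

lemma map_sword_W: "map (sword e) [0..<length (W e n)] = W e n"
  by (rule nth_equalityI) (simp_all add: sword_eq_nth_W)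

text \<open>\<open>(a, b, c, d)\<close> is the matrix with rows \<open>(a, b)\<close> and \<open>(c, d)\<close>.\<close>
type_synonym mat2 = "bit fls \<times> bit fls \<times> bit fls \<times> bit fls"

fun mat2_mult :: "mat2 \<Rightarrow> mat2 \<Rightarrow> mat2" where
  "mat2_mult (a, b, c, d) (e, f, g, h) = (a*e + b*g, a*f + b*h, c*e + d*g, c*f + d*h)"

fun cf_matrix :: "bit fls list \<Rightarrow> mat2" where
  "cf_matrix [] = (1, 0, 0, 1)"
| "cf_matrix (x # l) = mat2_mult (x, 1, 1, 0) (cf_matrix l)"

lemma mat2_mult_assoc: "mat2_mult (mat2_mult A B) C = mat2_mult A (mat2_mult B C)"
  by (cases A; cases B; cases C) (simp add: algebra_simps)

lemma cf_matrix_append: "cf_matrix (l1 @ l2) = mat2_mult (cf_matrix l1) (cf_matrix l2)"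
proof (induction l1)
  case Nil show ?case by (cases "cf_matrix l2") simp
qed (simp add: mat2_mult_assoc)

lemma cf_fin_cf_matrix:
  assumes "l \<noteq> []" "\<forall>x\<in>set l. pos_deg x"
  shows "cf_fin l = fst (cf_matrix l) / fst (snd (snd (cf_matrix l)))"
  using assms
proof (induction l rule: cf_fin.induct)
  case (3 x y ys)
  obtain A B C D where m: "cf_matrix (y # ys) = (A, B, C, D)" by (cases "cf_matrix (y # ys)") auto
  have IH: "cf_fin (y # ys) = A / C" using 3 m by simp
  moreover have "cf_fin (y # ys) \<noteq> 0" using 3 pos_deg_cf_fin[of "y # ys"] by (simp add: pos_deg_def)
  ultimately have "A \<noteq> 0" "C \<noteq> 0" by auto
  have "cf_fin (x # y # ys) = x + inverse (A / C)" by (simp add: IH)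
  also have "\<dots> = (x*A + C) / A" using \<open>A \<noteq> 0\<close> \<open>C \<noteq> 0\<close> by (simp add: field_simps)
  finally have "cf_fin (x # y # ys) = (x*A + C) / A" .
  moreover have "cf_matrix (x # y # ys) = (x*A + C, x*B + D, A, B)"
    unfolding cf_matrix.simps(2)[of x "y # ys"] m by simp
  ultimately show ?case by simp
qed simp_all

primrec Wp :: "(nat \<Rightarrow> bit fls) \<Rightarrow> nat \<Rightarrow> bit fls" where
  "Wp e 0 = 1"
| "Wp e (Suc n) = e n * Wp e n ^ 2"

primrec Wq :: "(nat \<Rightarrow> bit fls) \<Rightarrow> nat \<Rightarrow> bit fls" where
  "Wq e 0 = 0"
| "Wq e (Suc n) = e n * Wp e n * Wq e n + 1"

primrec Wr :: "(nat \<Rightarrow> bit fls) \<Rightarrow> nat \<Rightarrow> bit fls" where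
  "Wr e 0 = 1"
| "Wr e (Suc n) = e n * Wq e n ^ 2"

text \<open>The determinant identity is carried along because it is what reduces the off-diagonal
  entries of \<open>M (x, 1; 1, 0) M\<close> to \<open>x p q + 1\<close>.\<close>
lemma cf_matrix_W:
  "cf_matrix (W e n) = (Wp e n, Wq e n, Wq e n, Wr e n) \<and> Wp e n * Wr e n + Wq e n ^ 2 = 1"
proof (induction n)
  case (Suc n)
  define p q r x where "p = Wp e n" and "q = Wq e n" and "r = Wr e n" and "x = e n"
  have det: "p * r + q ^ 2 = 1" using Suc by (simp add: p_def q_def r_def)
  have "cf_matrix (W e (Suc n)) = mat2_mult (p, q, q, r) (mat2_mult (x, 1, 1, 0) (p, q, q, r))"
    using Suc by (simp add: cf_matrix_append p_def q_def r_def x_def)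
  also have "\<dots> = (x*p^2 + 2*(p*q), x*p*q + 1, x*p*q + 1, x*q^2 + 2*(q*r))"
    unfolding mat2_mult.simps prod.inject
    by (intro conjI, algebra, use det in algebra, use det in algebra, algebra)
  also have "\<dots> = (Wp e (Suc n), Wq e (Suc n), Wq e (Suc n), Wr e (Suc n))"
    by (simp add: bit_fls_add_double p_def q_def r_def x_def)
  finally have "cf_matrix (W e (Suc n)) = (Wp e (Suc n), Wq e (Suc n), Wq e (Suc n), Wr e (Suc n))" .
  moreover have "(x*p^2) * (x*q^2) + (x*p*q + 1)^2 = 1 + 2 * ((x*p*q)^2 + x*p*q)" by algebra
  hence "Wp e (Suc n) * Wr e (Suc n) + Wq e (Suc n) ^ 2 = 1"
    by (simp add: bit_fls_add_double p_def q_def r_def x_def)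
  ultimately show ?case by blast
qed simp

lemma convergent_cf_sword_W:
  assumes "\<forall>k. pos_deg (e k)" "n \<ge> 1"
  shows "convergent_cf (sword e) (2 ^ n - 2) = Wp e n / Wq e n"
proof -
  have "(2::nat) \<le> 2 ^ n" using assms(2) by (metis power_increasing power_one_right one_le_numeral)
  hence len: "length (W e n) = Suc (2 ^ n - 2)" by (simp add: length_W)
  hence "convergent_cf (sword e) (2 ^ n - 2) = cf_fin (W e n)"
    unfolding convergent_cf_def by (metis map_sword_W)
  also have "\<dots> = Wp e n / Wq e n"
  proof -
    have "\<forall>x\<in>set (W e n). pos_deg x" using assms(1) set_W_subset[of e n] by blast
    moreover have "W e n \<noteq> []" using len by auto
    ultimately show ?thesis using cf_fin_cf_matrix cf_matrix_W by simp
  qed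
  finally show ?thesis .
qed

lemma Wp_nonzero: "\<forall>k. e k \<noteq> 0 \<Longrightarrow> Wp e n \<noteq> 0"
  by (induction n) simp_all

lemma fls_subdegree_Wp: "\<forall>k. pos_deg (e k) \<Longrightarrow> fls_subdegree (Wp e n) \<le> - int n"
proof (induction n)
  case (Suc n)
  have "e n \<noteq> 0" "fls_subdegree (e n) \<le> -1" using Suc.prems by (auto simp: pos_deg_def)
  moreover have "Wp e n \<noteq> 0" using Suc.prems by (intro Wp_nonzero) (auto simp: pos_deg_def)
  ultimately show ?case using Suc by (simp add: power2_eq_square)
qed simp

lemma Wq_div_Wp_Suc:
  "\<forall>k. e k \<noteq> 0 \<Longrightarrow> Wq e (Suc n) / Wp e (Suc n) = Wq e n / Wp e n + inverse (Wp e (Suc n))"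
  using Wp_nonzero[of e n] by (simp add: field_simps power2_eq_square)

lemma inverse_CF_approx:
  assumes "\<forall>k. pos_deg (e k)"
  shows "vanishes_below (2 ^ Suc n - 1) (inverse (CF (sword e)) - Wq e n / Wp e n)"
proof (cases n)
  case 0
  have "\<forall>i. pos_deg (sword e i)" using assms by (simp add: pos_deg_sword)
  thus ?thesis using 0 by (simp add: pos_deg_CF vanishes_below_inverse_pos_deg)
next
  case (Suc m)
  have pos_deg_s: "\<forall>i. pos_deg (sword e i)" using assms by (simp add: pos_deg_sword)
  define x where "x = convergent_cf (sword e) (2 ^ n - 2)"
  have "vanishes_below (2 * int (2 ^ n - 2) + 1) (CF (sword e) - x)"
    unfolding x_def vanishes_below_minus_commute[of _ "CF _"] by (rule convergent_cf_approx_CF[OF pos_deg_s])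
  hence "vanishes_below (2 * int (2 ^ n - 2) + 1 + 2) (inverse (CF (sword e)) - inverse x)"
    unfolding x_def by (intro inverse_diff_vanishes_below pos_deg_CF pos_deg_convergent_cf pos_deg_s)
  moreover have "inverse x = Wq e n / Wp e n"
    unfolding x_def using Suc by (subst convergent_cf_sword_W[OF assms]) simp_all
  moreover have "2 * int (2 ^ n - 2) + 1 + 2 = 2 ^ Suc n - 1"
    using Suc by (simp add: of_nat_diff)
  ultimately show ?thesis by simp
qed

section \<open>Splitting \<open>q\<^sub>n/p\<^sub>n\<close> by parity\<close>

definition odd_sum :: "(nat \<Rightarrow> bit fls) \<Rightarrow> nat \<Rightarrow> bit fls" where
  "odd_sum e m = (\<Sum>j<m. inverse (Wp e (2 * j + 1)))"

definition even_sum :: "(nat \<Rightarrow> bit fls) \<Rightarrow> nat \<Rightarrow> bit fls" where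
  "even_sum e m = (\<Sum>j<m. inverse (Wp e (2 * j + 2)))"

lemma Wq_div_Wp_double:
  assumes "\<forall>k. e k \<noteq> 0"
  shows "Wq e (2 * m) / Wp e (2 * m) = odd_sum e m + even_sum e m"
proof (induction m)
  case (Suc m)
  have "Wq e (2 * Suc m) / Wp e (2 * Suc m)
      = Wq e (2 * m) / Wp e (2 * m) + inverse (Wp e (2 * m + 1)) + inverse (Wp e (2 * m + 2))"
    using Wq_div_Wp_Suc[OF assms, of "Suc (2 * m)"] Wq_div_Wp_Suc[OF assms, of "2 * m"] by simp
  thus ?case using Suc by (simp add: odd_sum_def even_sum_def)
qed (simp add: odd_sum_def even_sum_def)

lemma even_sum_mult:
  assumes "\<And>m. e (2 * m + 1) = b" "b \<noteq> 0"
  shows "even_sum e m * b = odd_sum e m ^ 2"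
proof (induction m)
  case (Suc m)
  have "inverse (Wp e (2 * m + 2)) * b = inverse (Wp e (2 * m + 1)) ^ 2"
    using assms by (simp add: field_simps power_inverse)
  hence "even_sum e (Suc m) * b = odd_sum e m ^ 2 + inverse (Wp e (2 * m + 1)) ^ 2"
    using Suc by (simp add: even_sum_def distrib_right)
  thus ?case by (simp add: odd_sum_def bit_fls_power2_add)
qed (simp add: odd_sum_def even_sum_def)

lemma odd_sum_Suc:
  assumes "e 0 = a" "\<And>m. e (2 * m + 2) = c"
  shows "odd_sum e (Suc m) = inverse a + even_sum e m ^ 2 * inverse c"
proof (induction m)
  case (Suc m)
  have Wp_odd: "Wp e (Suc (2 * m + 2)) = c * Wp e (2 * m + 2) ^ 2"
    using assms(2)[of m] by (simp only: Wp.simps(2))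
  have "odd_sum e (Suc (Suc m)) = odd_sum e (Suc m) + inverse (Wp e (Suc (2 * m + 2)))"
    by (simp add: odd_sum_def del: Wp.simps)
  also have "\<dots> = inverse a + (even_sum e m ^ 2 + inverse (Wp e (2 * m + 2)) ^ 2) * inverse c"
    unfolding Suc Wp_odd by (simp add: power_inverse algebra_simps del: Wp.simps)
  also have "\<dots> = inverse a + even_sum e (Suc m) ^ 2 * inverse c"
    by (simp add: even_sum_def bit_fls_power2_add del: Wp.simps)
  finally show ?case .
qed (simp add: odd_sum_def even_sum_def assms(1))

lemma quartic_of_sums:
  fixes u v d a b c :: "bit fls"
  assumes "c \<noteq> 0" "v * b = u ^ 2" "u + d = inverse a + v ^ 2 * inverse c"
  shows "(u + v) ^ 4 = b*c*(b + c) * inverse a + c^2 * inverse a ^ 2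
    + b*c*(b + c) * (u + v) + b*c * (u + v) ^ 2 + b*c*(b + c) * d + c^2 * d^2"
proof -
  have "v ^ 2 * inverse c = (u + d) - inverse a" using assms(3) by simp
  hence v2: "v ^ 2 = c * (u + inverse a + d)"
    using assms(1) by (simp add: bit_fls_diff_eq_add field_simps)
  have sum2: "(u + v) ^ 2 = v * b + c * (u + inverse a + d)"
    using assms(2) v2 by (simp add: bit_fls_power2_add)
  have "(u + v) ^ 4 = (u ^ 2) ^ 2 + (v ^ 2) ^ 2"
    by (simp add: bit_fls_power4_add flip: power_mult)
  also have "\<dots> = b^2 * c * (u + inverse a + d) + c^2 * (v * b + inverse a ^ 2 + d ^ 2)"
    unfolding v2 assms(2)[symmetric] bit_fls_power2_add power_mult_distrib by algebra
  also have "\<dots> = b*c*(b + c) * inverse a + c^2 * inverse a ^ 2 + b*c*(b + c) * (u + v)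
      + b*c * (u + v) ^ 2 + b*c*(b + c) * d + c^2 * d^2"
  proof -
    have "b*c*(b + c) * inverse a + c^2 * inverse a ^ 2 + b*c*(b + c) * (u + v)
        + b*c * (u + v) ^ 2 + b*c*(b + c) * d + c^2 * d^2
      = b^2 * c * (u + inverse a + d) + c^2 * (v * b + inverse a ^ 2 + d ^ 2)
        + 2 * (b * c^2 * (inverse a + u + d) + b^2 * c * v)"
      unfolding sum2 by algebra
    thus ?thesis by (simp only: bit_fls_add_double)
  qed
  finally show ?thesis .
qed

lemma vanishes_below_inverse_Wp:
  "\<forall>k. pos_deg (e k) \<Longrightarrow> vanishes_below (int n) (inverse (Wp e n))"
  using fls_subdegree_Wp[of e n] vanishes_below_inverse[of "Wp e n"]
  by (auto intro: vanishes_below_mono[rotated])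

lemma inverse_CF_approx_sums:
  assumes "\<forall>k. pos_deg (e k)"
  shows "vanishes_below (int k) (inverse (CF (sword e)) - (odd_sum e (Suc k) + even_sum e (Suc k)))"
proof -
  have "\<forall>k. e k \<noteq> 0" using assms by (simp add: pos_deg_def)
  hence "Wq e (2 * Suc k) / Wp e (2 * Suc k) = odd_sum e (Suc k) + even_sum e (Suc k)"
    by (rule Wq_div_Wp_double)
  hence "vanishes_below (2 ^ Suc (2 * Suc k) - 1)
      (inverse (CF (sword e)) - (odd_sum e (Suc k) + even_sum e (Suc k)))"
    using inverse_CF_approx[OF assms, of "2 * Suc k"] by simp
  moreover have "int k \<le> 2 ^ Suc (2 * Suc k) - 1"
  proof -
    have "int k < 2 ^ k" by (rule of_nat_less_two_power)
    also have "(2::int) ^ k \<le> 2 ^ Suc (2 * Suc k)" by (rule power_increasing) simp_all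
    finally show ?thesis by simp
  qed
  ultimately show ?thesis by (rule vanishes_below_mono[rotated])
qed

lemma alternating_cases:
  fixes f :: "nat \<Rightarrow> 'a"
  assumes "f 0 = a" "\<And>m. f (2 * m + 1) = b" "\<And>m. f (2 * m + 2) = c"
  shows "f k \<in> {a, b, c}"
proof (cases k)
  case (Suc j)
  show ?thesis
  proof (cases "even j")
    case True
    then obtain m where "k = 2 * m + 1" using Suc by (auto elim: evenE)
    thus ?thesis using assms(2) by simp
  next
    case False
    then obtain m where "k = 2 * m + 2" using Suc by (auto elim: oddE)
    thus ?thesis using assms(3) by simp
  qed
qed (simp add: assms(1))

lemma inverse_CF_quartic:
  fixes a b c :: "bit fls" and e :: "nat \<Rightarrow> bit fls"
  assumes pos_deg_e: "\<forall>k. pos_deg (e k)"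
    and e_alt: "e 0 = a" "\<And>m. e (2 * m + 1) = b" "\<And>m. e (2 * m + 2) = c"
  defines "\<beta> \<equiv> inverse (CF (sword e))"
  shows "\<beta> ^ 4 = b*c*(b + c) * inverse a + c^2 * inverse a ^ 2 + b*c*(b + c) * \<beta> + b*c * \<beta> ^ 2"
proof (rule quartic_root_of_approximations[where u = "\<lambda>k. odd_sum e (Suc k) + even_sum e (Suc k)"
      and d = "\<lambda>k. inverse (Wp e (2 * k + 3))"])
  fix k
  show "vanishes_below (int k) (\<beta> - (odd_sum e (Suc k) + even_sum e (Suc k)))"
    unfolding \<beta>_def by (rule inverse_CF_approx_sums[OF pos_deg_e])
  show "vanishes_below (int k) (inverse (Wp e (2 * k + 3)))"
    using vanishes_below_inverse_Wp[OF pos_deg_e, of "2 * k + 3"] by (rule vanishes_below_mono[rotated]) simp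
  have "b \<noteq> 0" "c \<noteq> 0" using pos_deg_e e_alt(2,3)[of 0] by (metis pos_deg_def)+
  have "odd_sum e (Suc k) + inverse (Wp e (2 * k + 3)) = odd_sum e (Suc (Suc k))"
    by (simp add: odd_sum_def numeral_3_eq_3 del: Wp.simps)
  also have "\<dots> = inverse a + even_sum e (Suc k) ^ 2 * inverse c"
    using e_alt(1,3) by (rule odd_sum_Suc)
  finally show "(odd_sum e (Suc k) + even_sum e (Suc k)) ^ 4 = b*c*(b + c) * inverse a + c^2 * inverse a ^ 2
      + b*c*(b + c) * (odd_sum e (Suc k) + even_sum e (Suc k))
      + b*c * (odd_sum e (Suc k) + even_sum e (Suc k)) ^ 2
      + b*c*(b + c) * inverse (Wp e (2 * k + 3)) + c^2 * inverse (Wp e (2 * k + 3)) ^ 2"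
    using e_alt(2) \<open>b \<noteq> 0\<close> by (intro quartic_of_sums \<open>c \<noteq> 0\<close> even_sum_mult)
qed

theorem mainTheorem4:
  fixes a b c :: "bit poly" and eps :: "nat \<Rightarrow> bit poly" and \<beta> :: "bit fls"
  assumes "degree a \<ge> 1" and "degree b \<ge> 1" and "degree c \<ge> 1"
    and "eps 0 = a"
    and "\<And>m. eps (2 * m + 1) = b"
    and "\<And>m. eps (2 * m + 2) = c"
    and "\<beta> = inverse (CF (\<lambda>i. emb (sword eps i)))"
  shows "convergent_cf (\<lambda>i. emb (sword eps i)) \<longlonglongrightarrow> CF (\<lambda>i. emb (sword eps i))
    \<and> \<beta> ^ 4 = emb (b * c * (b + c)) / emb a + emb (c ^ 2) / emb (a ^ 2)
                 + emb (b * c * (b + c)) * \<beta> + emb (b * c) * \<beta> ^ 2"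
proof -
  define e where "e = emb \<circ> eps"
  have s_eq: "(\<lambda>i. emb (sword eps i)) = sword e" by (simp add: sword_comp e_def)
  have pos_deg_e: "\<forall>k. pos_deg (e k)"
  proof
    fix k
    have "eps k \<in> {a, b, c}" using assms(4-6) by (rule alternating_cases)
    thus "pos_deg (e k)" using assms(1-3) by (auto simp: e_def intro: pos_deg_emb)
  qed
  have "convergent_cf (sword e) \<longlonglongrightarrow> CF (sword e)"
    by (intro convergent_cf_tendsto_CF allI pos_deg_sword pos_deg_e)
  moreover have "inverse (CF (sword e)) ^ 4 = emb b * emb c * (emb b + emb c) * inverse (emb a)
      + emb c ^ 2 * inverse (emb a) ^ 2 + emb b * emb c * (emb b + emb c) * inverse (CF (sword e))
      + emb b * emb c * inverse (CF (sword e)) ^ 2"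
    using assms(4-6) by (intro inverse_CF_quartic pos_deg_e) (simp_all add: e_def)
  ultimately show ?thesis
    by (simp add: assms(7) s_eq emb_mult emb_add emb_power divide_inverse power_inverse)
qed

end
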